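(* Let $h$ and $k$ be relatively prime integers with $k>0$ and $h+k$ odd. Then $$B_{1}(h,k)=\frac{2(1-h)}{\pi}\sum_{n=1}^{\infty}\frac{1}{2n-1}\tan\left(\frac{\pi h(2n-1)}{2k}\right).$$
   Context: $[x]$ denotes the greatest integer $\le x$. For integers $h,k$ with $k>0$ and $\gcd(h,k)=1$, $$B_{1}(h,k)=\sum_{j=1}^{k-1}(-1)^{j+\left[\frac{hj}{k}\right]}\left[\frac{hj}{k}\right].$$ *)

theory Defs
  imports Complex_Main
begin

definition B1 :: "int \<Rightarrow> int \<Rightarrow> int" where
  "B1 h k = (\<Sum>j\<in>{1..k-1}.
      (let q = \<lfloor>real_of_int (h * j) / real_of_int k\<rfloor>
       in (if even (j + q) then 1 else -1) * q))"

end

theory Submission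
  imports Defs "HOL-Analysis.Analysis"
begin

text \<open>Since h + k is odd, x = \<pi> h (2n+1) / (2k) is never an odd multiple of \<pi>/2, and the
  telescoping identity 2 cos x \<Sum>(j = 1..N) (-1)^(j+1) sin (2jx) = sin x - (-1)^N sin ((2N+1)x)
  with N = k - 1, where (2k - 1) x = h (2n+1) \<pi> - x, gives the finite expansion
  tan x = \<Sum>(j = 1..k-1) (-1)^(j+1) sin (2jx).
  Summing over n first turns each term into the square wave
  \<Sum>(n \<ge> 0) sin ((2n+1) t) / (2n+1) = \<pi>/4 sgn (sin t) at t = \<pi> h j / k, so the series equals
  -\<pi>/4 \<Sum>(j = 1..k-1) (-1)^(j + [hj/k]). The reflection j \<mapsto> k - j sends [hj/k] to
  h - 1 - [hj/k] (coprimality excludes k | hj) and preserves the sign (-1)^(j + [hj/k]), so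
  2 B_1(h,k) = (h - 1) \<Sum>(j = 1..k-1) (-1)^(j + [hj/k]).

  The square wave is reduced to Leibniz's series at t = \<pi>/2: the partial sums S_N have
  derivative sin (2Nt) / (2 sin t), and S_N(t) + cos (2Nt) / (4N sin t) has a derivative of
  order 1/N between t and \<pi>/2.\<close>

definition parity_sign :: "int \<Rightarrow> 'a::ring_1" where
  "parity_sign m = (if even m then 1 else -1)"

lemma of_int_parity_sign [simp]: "of_int (parity_sign m) = parity_sign m"
  by (simp add: parity_sign_def)

lemma parity_sign_add: "parity_sign (m + n) = parity_sign m * parity_sign n"
  by (simp add: parity_sign_def)

lemma parity_sign_odd_mult: "odd a \<Longrightarrow> parity_sign (a * m) = parity_sign m"
  by (simp add: parity_sign_def)

lemma sin_add_int_mult_pi: "sin (y + of_int m * pi) = parity_sign m * sin y"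
  using sin_npi_int[of m] cos_npi_int[of m] by (simp add: sin_add parity_sign_def mult.commute)

definition square_wave_sum :: "nat \<Rightarrow> real \<Rightarrow> real" where
  "square_wave_sum N t = (\<Sum>n<N. sin ((2 * real n + 1) * t) / (2 * real n + 1))"

lemma sin_mult_sum_cos_odd_multiples:
  "2 * sin t * (\<Sum>n<N. cos ((2 * real n + 1) * t)) = sin (2 * real N * t)"
proof (induction N)
  case 0
  then show ?case by simp
next
  case (Suc N)
  have "sin (2 * real (Suc N) * t) = sin ((2 * real N + 1) * t + t)"
       "sin (2 * real N * t) = sin ((2 * real N + 1) * t - t)"
    by (simp_all add: algebra_simps)
  then show ?case
    using Suc by (simp add: distrib_left sin_add sin_diff)
qed

lemma has_real_derivative_square_wave_sum:
  assumes "sin t \<noteq> 0"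
  shows "(square_wave_sum N has_real_derivative sin (2 * real N * t) / (2 * sin t)) (at t)"
proof -
  have "(square_wave_sum N has_real_derivative
          (\<Sum>n<N. cos ((2 * real n + 1) * t) * (2 * real n + 1) / (2 * real n + 1))) (at t)"
    unfolding square_wave_sum_def[abs_def] by (auto intro!: derivative_eq_intros)
  also have "(\<Sum>n<N. cos ((2 * real n + 1) * t) * (2 * real n + 1) / (2 * real n + 1))
      = (\<Sum>n<N. cos ((2 * real n + 1) * t))"
    by (intro sum.cong) auto
  also have "\<dots> = sin (2 * real N * t) / (2 * sin t)"
    using sin_mult_sum_cos_odd_multiples[of t N] assms by (simp add: field_simps)
  finally show ?thesis .
qed

lemma has_real_derivative_square_wave_sum_corrected:
  assumes "sin t \<noteq> 0" "N > 0"
  shows "((\<lambda>t. square_wave_sum N t + cos (2 * real N * t) / (4 * real N * sin t))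
           has_real_derivative - cos (2 * real N * t) * cos t / (4 * real N * (sin t)\<^sup>2)) (at t)"
  using assms
  by (auto intro!: derivative_eq_intros has_real_derivative_square_wave_sum
           simp: field_simps power2_eq_square)

lemma sin_le_sin_closed_segment_half_pi:
  assumes "0 < t" "t < pi" "x \<in> closed_segment t (pi/2)"
  shows "sin t \<le> sin x"
proof (cases "t \<le> pi/2")
  case True
  then show ?thesis using assms by (intro sin_monotone_2pi_le) (auto simp: closed_segment_eq_real_ivl)
next
  case False
  have "sin (pi - t) \<le> sin (pi - x)"
    using assms False by (intro sin_monotone_2pi_le) (auto simp: closed_segment_eq_real_ivl)
  then show ?thesis by simp
qed

lemma square_wave_sum_corrected_diff_half_pi_le:
  assumes "0 < t" "t < pi" "N > 0"
  defines "P \<equiv> \<lambda>t. square_wave_sum N t + cos (2 * real N * t) / (4 * real N * sin t)"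
  shows "\<bar>P t - P (pi/2)\<bar> \<le> \<bar>t - pi/2\<bar> / (4 * real N * (sin t)\<^sup>2)"
proof -
  have sin_t: "sin t > 0" using assms by (simp add: sin_gt_zero)
  have "norm (P t - P (pi/2)) \<le> 1 / (4 * real N * (sin t)\<^sup>2) * norm (t - pi/2)"
  proof (rule field_differentiable_bound[OF convex_closed_segment])
    fix x assume x: "x \<in> closed_segment t (pi/2)"
    have sin_x: "sin t \<le> sin x"
      using sin_le_sin_closed_segment_half_pi[OF assms(1,2) x] .
    show "(P has_field_derivative - cos (2 * real N * x) * cos x / (4 * real N * (sin x)\<^sup>2))
            (at x within closed_segment t (pi/2))"
      unfolding P_def using sin_t sin_x
      by (intro has_field_derivative_at_within[OF has_real_derivative_square_wave_sum_corrected]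
            assms(3)) simp
    have "norm (- cos (2 * real N * x) * cos x / (4 * real N * (sin x)\<^sup>2))
            = \<bar>cos (2 * real N * x) * cos x\<bar> / (4 * real N * (sin x)\<^sup>2)"
      by (simp add: abs_div)
    also have "\<dots> \<le> 1 / (4 * real N * (sin x)\<^sup>2)"
      by (intro divide_right_mono) (auto simp: abs_mult intro!: mult_le_one)
    also have "\<dots> \<le> 1 / (4 * real N * (sin t)\<^sup>2)"
      using sin_t sin_x assms(3)
      by (intro divide_left_mono mult_left_mono mult_pos_pos power_mono) auto
    finally show "norm (- cos (2 * real N * x) * cos x / (4 * real N * (sin x)\<^sup>2))
                    \<le> 1 / (4 * real N * (sin t)\<^sup>2)" .
  qed auto
  then show ?thesis by simp
qed

lemma square_wave_sum_diff_half_pi_le: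
  assumes "0 < t" "t < pi" "N > 0"
  shows "\<bar>square_wave_sum N t - square_wave_sum N (pi/2)\<bar>
           \<le> (\<bar>t - pi/2\<bar> / (4 * (sin t)\<^sup>2) + 1 / (4 * sin t) + 1/4) / real N"
proof -
  have sin_t: "sin t > 0" using assms by (simp add: sin_gt_zero)
  have "\<bar>cos (2 * real N * t) / (4 * real N * sin t)\<bar> \<le> 1 / (4 * real N * sin t)"
    using sin_t assms(3) by (auto simp: abs_div intro!: divide_right_mono)
  moreover have "\<bar>cos (2 * real N * (pi/2)) / (4 * real N * sin (pi/2))\<bar> \<le> 1 / (4 * real N)"
    by (simp add: abs_div)
  ultimately have "\<bar>square_wave_sum N t - square_wave_sum N (pi/2)\<bar>
      \<le> \<bar>t - pi/2\<bar> / (4 * real N * (sin t)\<^sup>2) + 1 / (4 * real N * sin t) + 1 / (4 * real N)"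
    using square_wave_sum_corrected_diff_half_pi_le[OF assms] unfolding abs_le_iff by linarith
  also have "\<dots> = (\<bar>t - pi/2\<bar> / (4 * (sin t)\<^sup>2) + 1 / (4 * sin t) + 1/4) / real N"
    using sin_t assms(3) by (simp add: field_simps)
  finally show ?thesis .
qed

lemma leibniz_sums: "(\<lambda>n. (-1)^n / (2 * real n + 1)) sums (pi/4)"
proof -
  have "summable (\<lambda>n. (-1)^n * (1 / real (n * 2 + 1) * (1::real) ^ (n * 2 + 1)))"
    by (rule summable_arctan_series) simp
  then show ?thesis
    unfolding pi_series by (simp add: summable_sums mult.commute add.commute)
qed

lemma square_wave_sum_half_pi: "square_wave_sum N (pi/2) = (\<Sum>n<N. (-1)^n / (2 * real n + 1))"
proof -
  have "sin ((2 * real n + 1) * (pi/2)) = (-1)^n" for n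
    using sin_cos_npi[of n] by (simp add: mult.commute add.commute)
  then show ?thesis unfolding square_wave_sum_def by simp
qed

lemma square_wave_sums:
  assumes "0 < t" "t < pi"
  shows "(\<lambda>n. sin ((2 * real n + 1) * t) / (2 * real n + 1)) sums (pi/4)"
proof -
  define C where "C = \<bar>t - pi/2\<bar> / (4 * (sin t)\<^sup>2) + 1 / (4 * sin t) + 1/4"
  have "(\<lambda>N. square_wave_sum N t - square_wave_sum N (pi/2)) \<longlonglongrightarrow> 0"
  proof (rule tendsto_0_le[where K = C])
    show "(\<lambda>N. 1 / real N) \<longlonglongrightarrow> 0" by (rule lim_const_over_n)
    show "\<forall>\<^sub>F N in sequentially.
            norm (square_wave_sum N t - square_wave_sum N (pi/2)) \<le> norm (1 / real N) * C"
      using eventually_gt_at_top[of "0::nat"]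
      by eventually_elim (use square_wave_sum_diff_half_pi_le[OF assms] in \<open>simp add: C_def\<close>)
  qed
  moreover have "(\<lambda>N. square_wave_sum N (pi/2)) \<longlonglongrightarrow> pi/4"
    using leibniz_sums unfolding sums_def square_wave_sum_half_pi .
  ultimately have "(\<lambda>N. (square_wave_sum N t - square_wave_sum N (pi/2)) + square_wave_sum N (pi/2))
                     \<longlonglongrightarrow> 0 + pi/4"
    by (rule tendsto_add)
  then show ?thesis unfolding sums_def square_wave_sum_def by simp
qed

lemma square_wave_sums_rational:
  fixes a k :: int
  assumes "k > 0" "\<not> k dvd a"
  shows "(\<lambda>n. sin ((2 * real n + 1) * (pi * of_int a / of_int k)) / (2 * real n + 1))
           sums (pi/4 * parity_sign (a div k))"
proof -
  define t where "t = pi * of_int (a mod k) / of_int k"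
  have "0 < a mod k" "a mod k < k"
    using assms by (simp_all add: dvd_eq_mod_eq_0 order_le_neq_trans)
  then have t: "0 < t" "t < pi"
    using assms unfolding t_def by (auto simp: field_simps)
  have "(2 * real n + 1) * (pi * of_int a / of_int k)
          = (2 * real n + 1) * t + of_int ((2 * int n + 1) * (a div k)) * pi" for n
  proof -
    have "of_int a = of_int k * of_int (a div k) + (of_int (a mod k) :: real)"
      by (metis of_int_add of_int_mult div_mult_mod_eq add.commute mult.commute)
    then show ?thesis using assms unfolding t_def by (simp add: field_simps)
  qed
  moreover have odd_2n1: "odd (2 * int n + 1)" for n by simp
  ultimately have "sin ((2 * real n + 1) * (pi * of_int a / of_int k))
               = parity_sign (a div k) * sin ((2 * real n + 1) * t)" for n
    by (simp only: sin_add_int_mult_pi parity_sign_odd_mult odd_2n1 not_False_eq_True)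
  then show ?thesis
    using sums_mult[OF square_wave_sums[OF t], of "parity_sign (a div k)"]
    by (simp add: mult.commute mult.left_commute)
qed


lemma cos_mult_sum_sin_even_multiples:
  "2 * cos x * (\<Sum>j\<in>{1..int N}. parity_sign (j + 1) * sin (2 * of_int j * x))
     = sin x - parity_sign (int N) * sin ((2 * real N + 1) * x)"
proof (induction N)
  case 0
  then show ?case by (simp add: parity_sign_def)
next
  case (Suc N)
  let ?s = "\<lambda>j. parity_sign (j + 1) * sin (2 * of_int j * x)"
  define y where "y = 2 * real (Suc N) * x"
  have angles: "2 * of_int (int N + 1) * x = y" "(2 * real N + 1) * x = y - x"
    "(2 * real (Suc N) + 1) * x = y + x"
    by (simp_all add: y_def algebra_simps)
  have "{1..int (Suc N)} = insert (int N + 1) {1..int N}" by auto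
  then have "2 * cos x * (\<Sum>j\<in>{1..int (Suc N)}. ?s j)
      = 2 * cos x * (\<Sum>j\<in>{1..int N}. ?s j) + 2 * cos x * ?s (int N + 1)"
    by (simp add: distrib_left)
  also have "\<dots> = sin x - parity_sign (int N) * sin (y - x)
      + parity_sign (int N) * (sin (y - x) + sin (y + x))"
    unfolding Suc.IH angles by (simp add: sin_add sin_diff parity_sign_def)
  also have "\<dots> = sin x - parity_sign (int (Suc N)) * sin ((2 * real (Suc N) + 1) * x)"
    unfolding angles by (simp add: parity_sign_def)
  finally show ?case .
qed

lemma cos_pi_mult_divide_nonzero:
  fixes a k :: int
  assumes "odd (a + k)"
  shows "cos (pi * of_int a / (2 * of_int k)) \<noteq> 0"
proof
  assume "cos (pi * of_int a / (2 * of_int k)) = 0"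
  then obtain i where "odd i" and i: "pi * of_int a / (2 * of_int k) = of_int i * (pi/2)"
    using cos_zero_iff_int by blast
  show False
  proof (cases "k = 0")
    case True
    with i \<open>odd i\<close> show False by auto
  next
    case False
    with i have "real_of_int a = real_of_int (i * k)"
      by (simp add: field_simps)
    then have "a + k = (i + 1) * k"
      by (simp only: of_int_eq_iff distrib_right mult_1_left)
    with \<open>odd i\<close> assms show False by simp
  qed
qed

lemma tan_eq_sum_sin_even_multiples:
  fixes a k :: int
  assumes "k > 0" "odd (a + k)"
  defines "x \<equiv> pi * of_int a / (2 * of_int k)"
  shows "tan x = (\<Sum>j\<in>{1..k-1}. parity_sign (j + 1) * sin (2 * of_int j * x))"
proof -
  define N where "N = nat (k - 1)"
  have N: "k - 1 = int N" using assms(1) by (simp add: N_def)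
  have "(2 * real N + 1) * x = - x + of_int a * pi"
    using assms(1) N unfolding x_def by (simp add: field_simps)
  then have "sin ((2 * real N + 1) * x) = parity_sign a * sin (- x)"
    by (simp only: sin_add_int_mult_pi)
  then have "parity_sign (int N) * sin ((2 * real N + 1) * x) = - parity_sign (int N + a) * sin x"
    by (simp add: parity_sign_add)
  also have "parity_sign (int N + a) = 1"
    using assms(2) N by (simp add: parity_sign_def flip: N)
  finally have "2 * cos x * (\<Sum>j\<in>{1..k-1}. parity_sign (j + 1) * sin (2 * of_int j * x)) = 2 * sin x"
    using cos_mult_sum_sin_even_multiples[of x N] by (simp add: N)
  then show ?thesis
    using cos_pi_mult_divide_nonzero[OF assms(2)] unfolding x_def tan_def by (simp add: field_simps)
qed

lemma coprime_not_dvd_mult: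
  fixes h k j :: int
  assumes "coprime h k" "0 < j" "j < k"
  shows "\<not> k dvd h * j"
proof
  assume "k dvd h * j"
  then have "k dvd j" using assms(1) by (simp add: coprime_commute coprime_dvd_mult_right_iff)
  then show False using assms(2,3) zdvd_imp_le by fastforce
qed

lemma tan_series_sums:
  fixes h k :: int
  assumes "coprime h k" "k > 0" "odd (h + k)"
  shows "(\<lambda>n. tan (pi * of_int h * (2 * real n + 1) / (2 * of_int k)) / (2 * real n + 1))
           sums (- pi / 4 * (\<Sum>j\<in>{1..k-1}. parity_sign (j + h * j div k)))"
proof -
  have "tan (pi * of_int h * (2 * real n + 1) / (2 * of_int k)) / (2 * real n + 1)
      = (\<Sum>j\<in>{1..k-1}. parity_sign (j + 1)
           * (sin ((2 * real n + 1) * (pi * of_int (h * j) / of_int k)) / (2 * real n + 1)))" for n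
  proof -
    have "odd (h * (2 * int n + 1) + k)" using assms(3) by simp
    note tan_expansion = tan_eq_sum_sin_even_multiples[OF assms(2) this]
    have x: "pi * of_int h * (2 * real n + 1) / (2 * of_int k)
        = pi * of_int (h * (2 * int n + 1)) / (2 * of_int k)"
      by simp
    have angle: "2 * of_int j * (pi * of_int (h * (2 * int n + 1)) / (2 * of_int k))
        = (2 * real n + 1) * (pi * of_int (h * j) / of_int k)" for j
      using assms(2) by (simp add: field_simps)
    have "tan (pi * of_int h * (2 * real n + 1) / (2 * of_int k))
        = (\<Sum>j\<in>{1..k-1}. parity_sign (j + 1) * sin ((2 * real n + 1) * (pi * of_int (h * j) / of_int k)))"
      unfolding x tan_expansion angle ..
    then show ?thesis by (simp add: sum_divide_distrib)
  qed
  moreover have "(\<lambda>n. \<Sum>j\<in>{1..k-1}. parity_sign (j + 1)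
           * (sin ((2 * real n + 1) * (pi * of_int (h * j) / of_int k)) / (2 * real n + 1)))
      sums (\<Sum>j\<in>{1..k-1}. parity_sign (j + 1) * (pi / 4 * parity_sign (h * j div k)))"
    using coprime_not_dvd_mult[OF assms(1)]
    by (intro sums_sum sums_mult square_wave_sums_rational assms(2)) auto
  moreover have "parity_sign (j + 1) * (pi / 4 * parity_sign (h * j div k))
      = - pi / 4 * parity_sign (j + h * j div k)" for j
    by (simp add: parity_sign_def)
  ultimately show ?thesis by (simp add: sum_distrib_left)
qed

lemma mult_div_reflect:
  fixes h k j :: int
  assumes "coprime h k" "0 < j" "j < k"
  shows "h * (k - j) div k = h - 1 - h * j div k"
proof -
  have "h * (k - j) div k = (- (h * j) + h * k) div k"
    by (simp add: algebra_simps)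
  also have "\<dots> = h + (- (h * j)) div k"
    using assms(2,3) by (intro div_mult_self1) simp
  also have "(- (h * j)) div k = - (h * j div k) - 1"
    using coprime_not_dvd_mult[OF assms] assms(2,3)
    by (simp add: zdiv_zminus1_eq_if dvd_eq_mod_eq_0)
  finally show ?thesis by (simp add: algebra_simps)
qed

lemma B1_eq_sum_div:
  "B1 h k = (\<Sum>j\<in>{1..k-1}. parity_sign (j + h * j div k) * (h * j div k))"
  unfolding B1_def Let_def floor_divide_of_int_eq parity_sign_def ..

lemma two_B1_eq:
  fixes h k :: int
  assumes "coprime h k" "odd (h + k)"
  shows "2 * B1 h k = (h - 1) * (\<Sum>j\<in>{1..k-1}. parity_sign (j + h * j div k))"
proof -
  define q where "q j = h * j div k" for j
  define e :: "int \<Rightarrow> int" where "e j = parity_sign (j + q j)" for j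
  have reflect: "q (k - j) = h - 1 - q j" "e (k - j) = e j" if "j \<in> {1..k-1}" for j
  proof -
    show q: "q (k - j) = h - 1 - q j"
      using mult_div_reflect[OF assms(1)] that by (simp add: q_def)
    have "k - j + q (k - j) = (h + k - 1) - (j + q j)" by (simp add: q)
    with assms(2) show "e (k - j) = e j"
      by (simp add: e_def parity_sign_def) presburger
  qed
  have "(\<Sum>j\<in>{1..k-1}. e j * q j) = (\<Sum>j\<in>{1..k-1}. e (k - j) * q (k - j))"
    by (rule sum.reindex_bij_witness[of _ "\<lambda>j. k - j" "\<lambda>j. k - j"]) auto
  also have "\<dots> = (\<Sum>j\<in>{1..k-1}. e j * (h - 1) - e j * q j)"
    by (intro sum.cong) (auto simp: reflect algebra_simps)
  finally have "2 * (\<Sum>j\<in>{1..k-1}. e j * q j) = (h - 1) * (\<Sum>j\<in>{1..k-1}. e j)"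
    by (simp add: sum_subtractf sum_distrib_left mult.commute)
  then show ?thesis by (simp add: B1_eq_sum_div e_def q_def)
qed

theorem theorem21:
  fixes h k :: int
  assumes "coprime h k" and "k > 0" and "odd (h + k)"
  shows "summable (\<lambda>n::nat. tan (pi * real_of_int h * (2 * real n + 1) / (2 * real_of_int k))
                             / (2 * real n + 1))
    \<and> real_of_int (B1 h k) =
        2 * (1 - real_of_int h) / pi *
        (\<Sum>n. tan (pi * real_of_int h * (2 * real n + 1) / (2 * real_of_int k)) / (2 * real n + 1))"
proof -
  define E :: real where "E = (\<Sum>j\<in>{1..k-1}. parity_sign (j + h * j div k))"
  note series = tan_series_sums[OF assms, folded E_def]
  have "real_of_int (B1 h k) = (real_of_int h - 1) / 2 * E"
    using arg_cong[OF two_B1_eq[OF assms(1,3)], of real_of_int] by (simp add: E_def)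
  also have "\<dots> = 2 * (1 - real_of_int h) / pi * (- pi / 4 * E)"
    by (simp add: field_simps)
  finally show ?thesis
    using series by (simp add: sums_iff)
qed

end
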